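(* Let $\Gamma=\{f_1,f_2,f_3\}$ be a smooth solution on $(0,T)\times I$ of $\partial_tf_i=-\nabla_s^2\vec\kappa_i-\tfrac12|\vec\kappa_i|^2\vec\kappa_i+\lambda_i\vec\kappa_i+\varphi_i\partial_sf_i$ with $\vec\kappa_i(t,0)=0$, and with initial data satisfying $f_1(0,0)=f_2(0,0)=f_3(0,0)$. Then $f_1(t,0)=f_2(t,0)=f_3(t,0)$ for all $t$ if and only if $\partial_tf_i(t,0)=\partial_tf_j(t,0)$ for all $t$ and all $i,j$. In that case, writing $A_i=\nabla_s^2\vec\kappa_i(t,0)$, $T_i=\partial_sf_i(t,0)$, $T_{ij}=\langle T_i,T_j\rangle$ and $\varphi_i=\varphi_i(t,0)$, the vector $(\varphi_1,\varphi_2,\varphi_3)$ solves $$M\begin{pmatrix}\varphi_1\\\varphi_2\\\varphi_3\end{pmatrix}=\begin{pmatrix}-\langle A_2+A_3,T_1\rangle\\-\langle A_1+A_3,T_2\rangle\\-\langle A_1+A_2,T_3\rangle\end{pmatrix},\qquad M=\begin{pmatrix}2&-T_{12}&-T_{13}\\-T_{12}&2&-T_{23}\\-T_{13}&-T_{23}&2\end{pmatrix}.$$ Moreover, for any unit vectors $T_1,T_2,T_3\in\mathbb{R}^n$, $\det M=8-2(T_{12}^2+T_{23}^2+T_{13}^2)-2T_{12}T_{23}T_{13}\ge2(1-T_{12}T_{23}T_{13})\ge0$, with $\det M=0$ if and only if $T_1=T_2=T_3$ or $T_i=T_{i+1}$ and $T_{i+2}=-T_i$ for some $i$ (indices mod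 3); in particular $M$ is positive definite whenever $\dim\operatorname{span}\{T_1,T_2,T_3\}\ge2$.
   Context: $I=[0,1]$; $ds=|\partial_xf_i|dx$, $\partial_s=|\partial_xf_i|^{-1}\partial_x$, $\vec\kappa_i=\partial_s^2f_i$, $\nabla_s\phi=\partial_s\phi-\langle\partial_s\phi,\partial_sf_i\rangle\partial_sf_i$; $\lambda_i$ constants, $\varphi_i$ smooth scalar functions. *)

theory Defs
  imports "HOL-Analysis.Analysis"
begin

definition dx :: "(real \<Rightarrow> real \<Rightarrow> 'a::real_normed_vector) \<Rightarrow> real \<Rightarrow> real \<Rightarrow> 'a" where
  "dx g t x = vector_derivative (\<lambda>y. g t y) (at x)"

definition dt :: "(real \<Rightarrow> real \<Rightarrow> 'a::real_normed_vector) \<Rightarrow> real \<Rightarrow> real \<Rightarrow> 'a" where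
  "dt g t x = vector_derivative (\<lambda>s. g s x) (at t)"

fun partials :: "bool list \<Rightarrow> (real \<Rightarrow> real \<Rightarrow> 'a::real_normed_vector) \<Rightarrow> real \<Rightarrow> real \<Rightarrow> 'a" where
  "partials [] g = g"
| "partials (b # bs) g = (if b then dt else dx) (partials bs g)"

definition smooth_on2 :: "(real \<times> real) set \<Rightarrow> (real \<Rightarrow> real \<Rightarrow> 'a::real_normed_vector) \<Rightarrow> bool" where
  "smooth_on2 U g \<longleftrightarrow> (\<forall>bs. \<forall>p\<in>U. (\<lambda>q. partials bs g (fst q) (snd q)) differentiable (at p))"

definition ds :: "(real \<Rightarrow> real \<Rightarrow> 'a::real_inner) \<Rightarrow> (real \<Rightarrow> real \<Rightarrow> 'a) \<Rightarrow> real \<Rightarrow> real \<Rightarrow> 'a" where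
  "ds f g t x = (1 / norm (dx f t x)) *\<^sub>R dx g t x"

definition nabla_s :: "(real \<Rightarrow> real \<Rightarrow> 'a::real_inner) \<Rightarrow> (real \<Rightarrow> real \<Rightarrow> 'a) \<Rightarrow> real \<Rightarrow> real \<Rightarrow> 'a" where
  "nabla_s f g t x = ds f g t x - (ds f g t x \<bullet> ds f f t x) *\<^sub>R ds f f t x"

definition kappa :: "(real \<Rightarrow> real \<Rightarrow> 'a::real_inner) \<Rightarrow> real \<Rightarrow> real \<Rightarrow> 'a" where
  "kappa f = ds f (ds f f)"

definition Mmat :: "'a::real_inner \<Rightarrow> 'a \<Rightarrow> 'a \<Rightarrow> real^3^3" where
  "Mmat T1 T2 T3 = vector [vector [2, -(T1 \<bullet> T2), -(T1 \<bullet> T3)],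
                           vector [-(T1 \<bullet> T2), 2, -(T2 \<bullet> T3)],
                           vector [-(T1 \<bullet> T3), -(T2 \<bullet> T3), 2]]"

definition pos_def_mat :: "real^'n^'n \<Rightarrow> bool" where
  "pos_def_mat M \<longleftrightarrow> transpose M = M \<and> (\<forall>v. v \<noteq> 0 \<longrightarrow> v \<bullet> (M *v v) > 0)"

end

theory Submission
  imports Defs
begin

text \<open>Since the endpoints start together, they stay together iff their velocities agree, by
  uniqueness of derivatives and a zero-derivative argument. At the junction the common velocity V
  satisfies V = -A i + phi i T i for each i (the curvature terms vanish there), with A i normal to
  the unit tangent T i; testing V against T j through curve j and through curve i gives the
  linear system for phi. For unit T i the quadratic form of M is the sum of the squares
  |w i T i - w j T j|^2, positive unless all T i lie on one line, and
  det M = 2(1 - T12^2) + 2(1 - T23^2) + 2(1 - T13^2) + 2(1 - T12 T23 T13) vanishes exactly when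
  every term does.\<close>

lemma Mmat_mult_vector_nth:
  fixes T1 T2 T3 :: "'a::real_inner" and w :: "real^3"
  shows "(Mmat T1 T2 T3 *v w)$1 = 2*w$1 - (T1\<bullet>T2)*w$2 - (T1\<bullet>T3)*w$3"
    and "(Mmat T1 T2 T3 *v w)$2 = -(T1\<bullet>T2)*w$1 + 2*w$2 - (T2\<bullet>T3)*w$3"
    and "(Mmat T1 T2 T3 *v w)$3 = -(T1\<bullet>T3)*w$1 - (T2\<bullet>T3)*w$2 + 2*w$3"
  by (simp_all add: Mmat_def matrix_vector_mult_def sum_3)

lemma det_Mmat:
  fixes T1 T2 T3 :: "'a::real_inner"
  shows "det (Mmat T1 T2 T3) =
    8 - 2*((T1\<bullet>T2)^2 + (T2\<bullet>T3)^2 + (T1\<bullet>T3)^2) - 2*(T1\<bullet>T2)*(T2\<bullet>T3)*(T1\<bullet>T3)"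
  by (simp add: Mmat_def det_3 power2_eq_square algebra_simps)

lemma transpose_Mmat: "transpose (Mmat T1 T2 T3) = Mmat T1 T2 T3"
  by (simp add: Mmat_def transpose_def vec_eq_iff forall_3 inner_commute)

lemma inner_Mmat_mult_vector:
  fixes T1 T2 T3 :: "'a::real_inner" and w :: "real^3"
  assumes "norm T1 = 1" "norm T2 = 1" "norm T3 = 1"
  shows "w \<bullet> (Mmat T1 T2 T3 *v w) = (norm (w$1 *\<^sub>R T1 - w$2 *\<^sub>R T2))^2
     + (norm (w$1 *\<^sub>R T1 - w$3 *\<^sub>R T3))^2 + (norm (w$2 *\<^sub>R T2 - w$3 *\<^sub>R T3))^2"
proof -
  have "T1 \<bullet> T1 = 1" "T2 \<bullet> T2 = 1" "T3 \<bullet> T3 = 1"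
    using assms by (simp_all add: dot_square_norm)
  then show ?thesis
    unfolding power2_norm_eq_inner
    by (simp add: inner_vec_def sum_3 Mmat_mult_vector_nth inner_diff_left inner_diff_right
        inner_commute algebra_simps power2_eq_square)
qed

lemma
  fixes x y :: "'a::real_inner"
  assumes "norm x = 1" "norm y = 1"
  shows abs_inner_unit_le_1: "\<bar>x \<bullet> y\<bar> \<le> 1"
    and inner_unit_eq_1_iff: "x \<bullet> y = 1 \<longleftrightarrow> x = y"
    and inner_unit_eq_minus_1_iff: "x \<bullet> y = -1 \<longleftrightarrow> y = - x"
proof -
  show "\<bar>x \<bullet> y\<bar> \<le> 1" using Cauchy_Schwarz_ineq2[of x y] assms by simp
  have unit: "x \<bullet> x = 1" "y \<bullet> y = 1" using assms by (simp_all add: dot_square_norm)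
  have "(norm (x - y))^2 = 2 - 2 * (x \<bullet> y)" "(norm (x + y))^2 = 2 + 2 * (x \<bullet> y)"
    unfolding power2_norm_eq_inner
    by (simp_all add: inner_diff_left inner_diff_right inner_add_left inner_add_right unit inner_commute)
  then show "x \<bullet> y = 1 \<longleftrightarrow> x = y" "x \<bullet> y = -1 \<longleftrightarrow> y = - x"
    by (auto simp: add_eq_0_iff)
qed

lemma cube_cubic_form_bounds:
  fixes a b c :: real
  assumes "\<bar>a\<bar> \<le> 1" "\<bar>b\<bar> \<le> 1" "\<bar>c\<bar> \<le> 1"
  shows "8 - 2*(a^2 + b^2 + c^2) - 2*a*b*c \<ge> 2*(1 - a*b*c)" and "2*(1 - a*b*c) \<ge> 0"
proof -
  have "a^2 \<le> 1" "b^2 \<le> 1" "c^2 \<le> 1" using assms by (simp_all add: abs_square_le_1)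
  moreover have "\<bar>a*b*c\<bar> \<le> 1" using assms by (simp add: abs_mult mult_le_one)
  ultimately show "8 - 2*(a^2 + b^2 + c^2) - 2*a*b*c \<ge> 2*(1 - a*b*c)" "2*(1 - a*b*c) \<ge> 0"
    by auto
qed

lemma cube_cubic_form_eq_0_iff:
  fixes a b c :: real
  assumes "\<bar>a\<bar> \<le> 1" "\<bar>b\<bar> \<le> 1" "\<bar>c\<bar> \<le> 1"
  shows "8 - 2*(a^2 + b^2 + c^2) - 2*a*b*c = 0 \<longleftrightarrow>
      (a = 1 \<and> b = 1 \<and> c = 1) \<or> (a = 1 \<and> b = -1 \<and> c = -1)
    \<or> (a = -1 \<and> b = 1 \<and> c = -1) \<or> (a = -1 \<and> b = -1 \<and> c = 1)"
proof
  assume zero: "8 - 2*(a^2 + b^2 + c^2) - 2*a*b*c = 0"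
  have "a^2 \<le> 1" "b^2 \<le> 1" "c^2 \<le> 1" using assms by (simp_all add: abs_square_le_1)
  moreover have "\<bar>a*b*c\<bar> \<le> 1" using assms by (simp add: abs_mult mult_le_one)
  ultimately have "a^2 = 1" "b^2 = 1" "c^2 = 1" and prod: "a*b*c = 1"
    using zero by auto
  then have "a = 1 \<or> a = -1" "b = 1 \<or> b = -1" "c = 1 \<or> c = -1"
    by (simp_all add: power2_eq_1_iff)
  with prod show "(a = 1 \<and> b = 1 \<and> c = 1) \<or> (a = 1 \<and> b = -1 \<and> c = -1)
    \<or> (a = -1 \<and> b = 1 \<and> c = -1) \<or> (a = -1 \<and> b = -1 \<and> c = 1)"
    by auto
qed (auto simp: power2_eq_square)

lemma det_Mmat_eq_0_iff:
  fixes T1 T2 T3 :: "'a::real_inner"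
  assumes n: "norm T1 = 1" "norm T2 = 1" "norm T3 = 1"
  shows "det (Mmat T1 T2 T3) = 0 \<longleftrightarrow>
      (T1 = T2 \<and> T2 = T3) \<or> (T1 = T2 \<and> T3 = - T1)
    \<or> (T2 = T3 \<and> T1 = - T2) \<or> (T3 = T1 \<and> T2 = - T3)"
proof -
  have "det (Mmat T1 T2 T3) = 0 \<longleftrightarrow>
      (T1 \<bullet> T2 = 1 \<and> T2 \<bullet> T3 = 1 \<and> T1 \<bullet> T3 = 1) \<or> (T1 \<bullet> T2 = 1 \<and> T2 \<bullet> T3 = -1 \<and> T1 \<bullet> T3 = -1)
    \<or> (T1 \<bullet> T2 = -1 \<and> T2 \<bullet> T3 = 1 \<and> T1 \<bullet> T3 = -1) \<or> (T1 \<bullet> T2 = -1 \<and> T2 \<bullet> T3 = -1 \<and> T1 \<bullet> T3 = 1)"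
    unfolding det_Mmat
    by (intro cube_cubic_form_eq_0_iff abs_inner_unit_le_1 n)
  also have "\<dots> \<longleftrightarrow> (T1 = T2 \<and> T2 = T3 \<and> T1 = T3) \<or> (T1 = T2 \<and> T3 = - T2 \<and> T3 = - T1)
    \<or> (T2 = - T1 \<and> T2 = T3 \<and> T3 = - T1) \<or> (T2 = - T1 \<and> T3 = - T2 \<and> T1 = T3)"
    by (simp only: inner_unit_eq_1_iff inner_unit_eq_minus_1_iff n)
  also have "\<dots> \<longleftrightarrow> (T1 = T2 \<and> T2 = T3) \<or> (T1 = T2 \<and> T3 = - T1)
    \<or> (T2 = T3 \<and> T1 = - T2) \<or> (T3 = T1 \<and> T2 = - T3)"
    by (metis equation_minus_iff)
  finally show ?thesis .
qed

lemma pos_def_Mmat: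
  fixes T1 T2 T3 :: "'a::euclidean_space"
  assumes n: "norm T1 = 1" "norm T2 = 1" "norm T3 = 1"
    and span2: "dim (span {T1, T2, T3}) \<ge> 2"
  shows "pos_def_mat (Mmat T1 T2 T3)"
  unfolding pos_def_mat_def
proof (intro conjI allI impI transpose_Mmat)
  fix w :: "real^3"
  assume "w \<noteq> 0"
  then have "w$1 \<noteq> 0 \<or> w$2 \<noteq> 0 \<or> w$3 \<noteq> 0" by (auto simp: vec_eq_iff forall_3)
  show "w \<bullet> (Mmat T1 T2 T3 *v w) > 0"
  proof (rule ccontr)
    assume "\<not> ?thesis"
    then have "w$1 *\<^sub>R T1 = w$2 *\<^sub>R T2" and "w$1 *\<^sub>R T1 = w$3 *\<^sub>R T3"
      unfolding inner_Mmat_mult_vector[OF n]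
      by (smt (verit) norm_eq_zero power2_less_0 zero_less_power2 right_minus_eq)+
    moreover define z where "z = w$1 *\<^sub>R T1"
    ultimately have z: "z = w$1 *\<^sub>R T1" "z = w$2 *\<^sub>R T2" "z = w$3 *\<^sub>R T3"
      by simp_all
    then have "\<bar>w$1\<bar> = norm z" "\<bar>w$2\<bar> = norm z" "\<bar>w$3\<bar> = norm z"
      using n by (metis norm_scaleR mult_1_right)+
    with \<open>w$1 \<noteq> 0 \<or> w$2 \<noteq> 0 \<or> w$3 \<noteq> 0\<close> have "w$1 \<noteq> 0" "w$2 \<noteq> 0" "w$3 \<noteq> 0"
      by auto
    then have "T1 = (1 / w$1) *\<^sub>R z" "T2 = (1 / w$2) *\<^sub>R z" "T3 = (1 / w$3) *\<^sub>R z"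
      by (metis z scaleR_scaleR divide_self_if divide_inverse_commute scaleR_one)+
    then have "span {T1, T2, T3} \<subseteq> span {z}"
      by (simp add: span_minimal span_mul span_base)
    then have "dim (span {T1, T2, T3}) \<le> card {z}"
      by (intro dim_le_card) auto
    with span2 show False by simp
  qed
qed

lemma Mmat_unit_vectors:
  fixes T1 T2 T3 :: "'a::euclidean_space"
  assumes n: "norm T1 = 1" "norm T2 = 1" "norm T3 = 1"
  shows "let a = T1 \<bullet> T2; b = T2 \<bullet> T3; c = T1 \<bullet> T3 in
             det (Mmat T1 T2 T3) = 8 - 2 * (a\<^sup>2 + b\<^sup>2 + c\<^sup>2) - 2 * a * b * c
           \<and> 8 - 2 * (a\<^sup>2 + b\<^sup>2 + c\<^sup>2) - 2 * a * b * c \<ge> 2 * (1 - a * b * c)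
           \<and> 2 * (1 - a * b * c) \<ge> 0
           \<and> (det (Mmat T1 T2 T3) = 0 \<longleftrightarrow>
                 (T1 = T2 \<and> T2 = T3) \<or> (T1 = T2 \<and> T3 = - T1)
               \<or> (T2 = T3 \<and> T1 = - T2) \<or> (T3 = T1 \<and> T2 = - T3))
           \<and> (dim (span {T1, T2, T3}) \<ge> 2 \<longrightarrow> pos_def_mat (Mmat T1 T2 T3))"
  unfolding Let_def
  using det_Mmat cube_cubic_form_bounds[OF abs_inner_unit_le_1[OF n(1,2)]
      abs_inner_unit_le_1[OF n(2,3)] abs_inner_unit_le_1[OF n(1,3)]]
    det_Mmat_eq_0_iff[OF n] pos_def_Mmat[OF n]
  by blast

lemma Mmat_mult_tangential_components:
  fixes V :: "'a::real_inner" and A T :: "nat \<Rightarrow> 'a" and p :: "nat \<Rightarrow> real"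
  assumes unit: "\<And>i. i \<in> {1,2,3} \<Longrightarrow> norm (T i) = 1"
    and normal: "\<And>i. i \<in> {1,2,3} \<Longrightarrow> A i \<bullet> T i = 0"
    and velocity: "\<And>i. i \<in> {1,2,3} \<Longrightarrow> V = - A i + p i *\<^sub>R T i"
  shows "Mmat (T 1) (T 2) (T 3) *v vector [p 1, p 2, p 3]
       = vector [- ((A 2 + A 3) \<bullet> T 1), - ((A 1 + A 3) \<bullet> T 2), - ((A 1 + A 2) \<bullet> T 3)]"
proof -
  have tested: "V \<bullet> T j = - (A i \<bullet> T j) + p i * (T i \<bullet> T j)" if "i \<in> {1,2,3}" for i j
    using velocity[OF that] by (simp add: inner_diff_left)
  have own: "V \<bullet> T i = p i" if "i \<in> {1,2,3}" for i
    using tested[OF that, of i] normal[OF that] unit[OF that] by (simp add: dot_square_norm)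
  have comm: "T 2 \<bullet> T 1 = T 1 \<bullet> T 2" "T 3 \<bullet> T 1 = T 1 \<bullet> T 3" "T 3 \<bullet> T 2 = T 2 \<bullet> T 3"
    by (simp_all add: inner_commute)
  have "2 * p 1 - (T 1 \<bullet> T 2) * p 2 - (T 1 \<bullet> T 3) * p 3 = - ((A 2 + A 3) \<bullet> T 1)"
    using own[of 1] tested[of 2 1] tested[of 3 1] comm by (simp add: inner_add_left algebra_simps)
  moreover have "-(T 1 \<bullet> T 2) * p 1 + 2 * p 2 - (T 2 \<bullet> T 3) * p 3 = - ((A 1 + A 3) \<bullet> T 2)"
    using own[of 2] tested[of 1 2] tested[of 3 2] comm by (simp add: inner_add_left algebra_simps)
  moreover have "-(T 1 \<bullet> T 3) * p 1 - (T 2 \<bullet> T 3) * p 2 + 2 * p 3 = - ((A 1 + A 2) \<bullet> T 3)"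
    using own[of 3] tested[of 1 3] tested[of 2 3] comm by (simp add: inner_add_left algebra_simps)
  ultimately show ?thesis
    unfolding vec_eq_iff forall_3 Mmat_mult_vector_nth by simp
qed

lemma has_vector_derivative_dt:
  fixes g :: "real \<Rightarrow> real \<Rightarrow> 'a::real_normed_vector"
  assumes "smooth_on2 U g" "(t, x) \<in> U"
  shows "((\<lambda>s. g s x) has_vector_derivative dt g t x) (at t)"
proof -
  have "(\<lambda>q. g (fst q) (snd q)) differentiable (at (t, x))"
    using assms unfolding smooth_on2_def by (metis partials.simps(1))
  then have "((\<lambda>q. g (fst q) (snd q)) \<circ> (\<lambda>s. (s, x))) differentiable (at t)"
    by (intro differentiable_chain_at) (auto intro: derivative_intros)
  then show ?thesis
    unfolding dt_def by (simp add: o_def vector_derivative_works)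
qed

lemma continuous_on_slice:
  assumes "continuous_on (S \<times> X) (\<lambda>p. g (fst p) (snd p))" "x \<in> X"
  shows "continuous_on S (\<lambda>s. g s x)"
proof -
  have "continuous_on S ((\<lambda>p. g (fst p) (snd p)) \<circ> (\<lambda>s. (s, x)))"
    by (rule continuous_on_compose[OF _ continuous_on_subset[OF assms(1)]])
      (use assms(2) in \<open>auto intro!: continuous_intros\<close>)
  then show ?thesis by (simp add: o_def)
qed

lemma eq_on_interval_iff_vector_derivative_eq:
  fixes g h :: "real \<Rightarrow> 'a::banach"
  assumes cont: "continuous_on {a..<b} g" "continuous_on {a..<b} h"
    and g': "\<And>s. s \<in> {a<..<b} \<Longrightarrow> (g has_vector_derivative g' s) (at s)"
    and h': "\<And>s. s \<in> {a<..<b} \<Longrightarrow> (h has_vector_derivative h' s) (at s)"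
    and start: "g a = h a"
  shows "(\<forall>s\<in>{a<..<b}. g s = h s) \<longleftrightarrow> (\<forall>s\<in>{a<..<b}. g' s = h' s)"
proof (intro iffI ballI)
  fix s assume eq: "\<forall>s\<in>{a<..<b}. g s = h s" and s: "s \<in> {a<..<b}"
  have "(h has_vector_derivative g' s) (at s)"
    using has_vector_derivative_transform_within_open[OF g'[OF s] _ s] eq by auto
  with h'[OF s] show "g' s = h' s"
    using vector_derivative_unique_at by blast
next
  fix s assume eq': "\<forall>s\<in>{a<..<b}. g' s = h' s" and s: "s \<in> {a<..<b}"
  have "{a..s} \<subseteq> {a..<b}" using s by auto
  then have cont_diff: "continuous_on {a..s} (\<lambda>r. g r - h r)"
    using continuous_on_subset[OF cont(1)] continuous_on_subset[OF cont(2)]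
    by (intro continuous_on_diff) blast+
  have deriv_diff: "((\<lambda>r. g r - h r) has_derivative (\<lambda>_. 0)) (at r within {a..s})"
    if "r \<in> {a..s} - {a, s}" for r
  proof -
    have r: "r \<in> {a<..<b}" using that s by auto
    have "((\<lambda>r. g r - h r) has_vector_derivative g' r - h' r) (at r)"
      using g'[OF r] h'[OF r] by (rule derivative_intros)
    with eq' r show ?thesis
      by (auto simp: has_vector_derivative_def intro: has_derivative_at_withinI)
  qed
  have "g s - h s = g a - h a"
    by (rule has_derivative_zero_unique_strong_interval[OF _ cont_diff _ deriv_diff, where k = "{a, s}"])
      (use s in auto)
  with start show "g s = h s" by simp
qed

lemma concurrent_iff_vector_derivatives_eq:
  fixes g :: "nat \<Rightarrow> real \<Rightarrow> 'a::banach"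
  assumes "\<And>i. i \<in> {1,2,3} \<Longrightarrow> continuous_on {a..<b} (g i)"
    and "\<And>i s. i \<in> {1,2,3} \<Longrightarrow> s \<in> {a<..<b} \<Longrightarrow> (g i has_vector_derivative g' i s) (at s)"
    and "g 1 a = g 2 a" "g 2 a = g 3 a"
  shows "(\<forall>s\<in>{a<..<b}. g 1 s = g 2 s \<and> g 2 s = g 3 s) \<longleftrightarrow>
         (\<forall>s\<in>{a<..<b}. \<forall>i\<in>{1,2,3}. \<forall>j\<in>{1,2,3}. g' i s = g' j s)"
proof -
  have "(\<forall>s\<in>{a<..<b}. g 1 s = g 2 s) \<longleftrightarrow> (\<forall>s\<in>{a<..<b}. g' 1 s = g' 2 s)"
    by (rule eq_on_interval_iff_vector_derivative_eq) (use assms in auto)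
  moreover have "(\<forall>s\<in>{a<..<b}. g 2 s = g 3 s) \<longleftrightarrow> (\<forall>s\<in>{a<..<b}. g' 2 s = g' 3 s)"
    by (rule eq_on_interval_iff_vector_derivative_eq) (use assms in auto)
  ultimately show ?thesis by auto
qed

lemma norm_ds_self: "dx F t x \<noteq> 0 \<Longrightarrow> norm (ds F F t x) = 1"
  unfolding ds_def by simp

lemma inner_nabla_s_ds_self:
  assumes "norm (ds F F t x) = 1"
  shows "nabla_s F g t x \<bullet> ds F F t x = 0"
  using assms unfolding nabla_s_def by (simp add: inner_diff_left dot_square_norm)

lemma junction_tangential_speeds:
  fixes f :: "nat \<Rightarrow> real \<Rightarrow> real \<Rightarrow> 'a::real_inner" and phi :: "nat \<Rightarrow> real \<Rightarrow> real \<Rightarrow> real"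
  assumes common_velocity: "\<And>i. i \<in> {1,2,3} \<Longrightarrow> dt (f i) t x = dt (f 1) t x"
    and regular: "\<And>i. i \<in> {1,2,3} \<Longrightarrow> dx (f i) t x \<noteq> 0"
    and flow: "\<And>i. i \<in> {1,2,3} \<Longrightarrow>
      dt (f i) t x = - nabla_s (f i) (nabla_s (f i) (kappa (f i))) t x
                     - (1/2 * (norm (kappa (f i) t x))\<^sup>2) *\<^sub>R kappa (f i) t x
                     + lam i *\<^sub>R kappa (f i) t x
                     + phi i t x *\<^sub>R ds (f i) (f i) t x"
    and flat: "\<And>i. i \<in> {1,2,3} \<Longrightarrow> kappa (f i) t x = 0"
  shows "let A = (\<lambda>i. nabla_s (f i) (nabla_s (f i) (kappa (f i))) t x);
             T = (\<lambda>i. ds (f i) (f i) t x)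
         in Mmat (T 1) (T 2) (T 3) *v vector [phi 1 t x, phi 2 t x, phi 3 t x]
            = vector [- ((A 2 + A 3) \<bullet> T 1), - ((A 1 + A 3) \<bullet> T 2), - ((A 1 + A 2) \<bullet> T 3)]"
  unfolding Let_def
proof (rule Mmat_mult_tangential_components)
  fix i :: nat assume i: "i \<in> {1,2,3}"
  show "norm (ds (f i) (f i) t x) = 1"
    using regular[OF i] by (rule norm_ds_self)
  then show "nabla_s (f i) (nabla_s (f i) (kappa (f i))) t x \<bullet> ds (f i) (f i) t x = 0"
    by (rule inner_nabla_s_ds_self)
  show "dt (f 1) t x = - nabla_s (f i) (nabla_s (f i) (kappa (f i))) t x
      + phi i t x *\<^sub>R ds (f i) (f i) t x"
    using common_velocity[OF i] flow[OF i] flat[OF i] by simp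
qed

theorem mainTheorem10:
  fixes f :: "nat \<Rightarrow> real \<Rightarrow> real \<Rightarrow> real^'n"
    and phi :: "nat \<Rightarrow> real \<Rightarrow> real \<Rightarrow> real"
    and lam :: "nat \<Rightarrow> real"
    and Tm :: real
    and U :: "(real \<times> real) set"
  assumes "Tm > 0"
    and "open U" and "{0<..<Tm} \<times> {0..1} \<subseteq> U"
    and "\<forall>i\<in>{1,2,3}. smooth_on2 U (f i) \<and> smooth_on2 U (phi i)"
    and "\<forall>i\<in>{1,2,3}. continuous_on ({0..<Tm} \<times> {0..1}) (\<lambda>p. f i (fst p) (snd p))"
    and "\<forall>i\<in>{1,2,3}. \<forall>t\<in>{0<..<Tm}. \<forall>x\<in>{0..1}. dx (f i) t x \<noteq> 0"
    and "\<forall>i\<in>{1,2,3}. \<forall>t\<in>{0<..<Tm}. \<forall>x\<in>{0..1}.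
           dt (f i) t x = - nabla_s (f i) (nabla_s (f i) (kappa (f i))) t x
                          - (1/2 * (norm (kappa (f i) t x))\<^sup>2) *\<^sub>R kappa (f i) t x
                          + lam i *\<^sub>R kappa (f i) t x
                          + phi i t x *\<^sub>R ds (f i) (f i) t x"
    and "\<forall>i\<in>{1,2,3}. \<forall>t\<in>{0<..<Tm}. kappa (f i) t 0 = 0"
    and "f 1 0 0 = f 2 0 0" and "f 2 0 0 = f 3 0 0"
  shows "((\<forall>t\<in>{0<..<Tm}. f 1 t 0 = f 2 t 0 \<and> f 2 t 0 = f 3 t 0) \<longleftrightarrow>
          (\<forall>t\<in>{0<..<Tm}. \<forall>i\<in>{1,2,3}. \<forall>j\<in>{1,2,3}. dt (f i) t 0 = dt (f j) t 0))
       \<and> ((\<forall>t\<in>{0<..<Tm}. f 1 t 0 = f 2 t 0 \<and> f 2 t 0 = f 3 t 0) \<longrightarrow>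
          (\<forall>t\<in>{0<..<Tm}.
             (let A = (\<lambda>i. nabla_s (f i) (nabla_s (f i) (kappa (f i))) t 0);
                  T = (\<lambda>i. ds (f i) (f i) t 0)
              in Mmat (T 1) (T 2) (T 3) *v vector [phi 1 t 0, phi 2 t 0, phi 3 t 0]
                 = vector [- ((A 2 + A 3) \<bullet> T 1), - ((A 1 + A 3) \<bullet> T 2), - ((A 1 + A 2) \<bullet> T 3)])))
       \<and> (\<forall>T1 T2 T3 :: real^'n. norm T1 = 1 \<and> norm T2 = 1 \<and> norm T3 = 1 \<longrightarrow>
           (let a = T1 \<bullet> T2; b = T2 \<bullet> T3; c = T1 \<bullet> T3 in
             det (Mmat T1 T2 T3) = 8 - 2 * (a\<^sup>2 + b\<^sup>2 + c\<^sup>2) - 2 * a * b * c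
           \<and> 8 - 2 * (a\<^sup>2 + b\<^sup>2 + c\<^sup>2) - 2 * a * b * c \<ge> 2 * (1 - a * b * c)
           \<and> 2 * (1 - a * b * c) \<ge> 0
           \<and> (det (Mmat T1 T2 T3) = 0 \<longleftrightarrow>
                 (T1 = T2 \<and> T2 = T3) \<or> (T1 = T2 \<and> T3 = - T1)
               \<or> (T2 = T3 \<and> T1 = - T2) \<or> (T3 = T1 \<and> T2 = - T3))
           \<and> (dim (span {T1, T2, T3}) \<ge> 2 \<longrightarrow> pos_def_mat (Mmat T1 T2 T3))))"
proof -
  let ?S = "{0<..<Tm}"
  have velocity: "((\<lambda>s. f i s 0) has_vector_derivative dt (f i) t 0) (at t)"
    if "i \<in> {1,2,3}" "t \<in> ?S" for i t
  proof (rule has_vector_derivative_dt)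
    show "smooth_on2 U (f i)" using assms(4) that(1) by blast
    show "(t, 0) \<in> U" using assms(3) that(2) by auto
  qed
  have slice_continuous: "continuous_on {0..<Tm} (\<lambda>s. f i s 0)" if "i \<in> {1,2,3}" for i
    by (rule continuous_on_slice[where X = "{0..1}"]) (use assms(5) that in auto)
  have concurrent: "(\<forall>t\<in>?S. f 1 t 0 = f 2 t 0 \<and> f 2 t 0 = f 3 t 0) \<longleftrightarrow>
      (\<forall>t\<in>?S. \<forall>i\<in>{1,2,3}. \<forall>j\<in>{1,2,3}. dt (f i) t 0 = dt (f j) t 0)"
    by (rule concurrent_iff_vector_derivatives_eq[where g = "\<lambda>i s. f i s 0"])
      (use slice_continuous velocity assms(9,10) in auto)
  show ?thesis
  proof (intro conjI impI ballI allI, goal_cases)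
    case 1
    show ?case by (rule concurrent)
  next
    case (2 t)
    with concurrent have "dt (f i) t 0 = dt (f 1) t 0" if "i \<in> {1,2,3}" for i
      using that by blast
    then show ?case
      by (rule junction_tangential_speeds[where lam = lam]) (use assms(6-8) 2(2) in auto)
  next
    case (3 T1 T2 T3)
    show ?case by (rule Mmat_unit_vectors) (use 3 in auto)
  qed
qed

end
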